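(* Let $x_s<x_t$ be integers, let $C\ge 0$, and let $f:[x_s,x_t]\to\mathbb{R}$ be such that $([x_s,x_t],f)$ is an Ameso($C$) pair. Suppose there exist $x^0\in[x_s,x_t]$ and a positive integer $b$ with $[x^0-b,x^0]\subseteq[x_s,x_t]$ such that $f(x^0)=\min_{y\in[x^0-b,x^0]}f(y)$ and $f(x^0)+C\le\max_{y\in[x^0-b,x^0]}f(y)$. Let $w^*=\min\{w\in[x^0-b,x^0]: f(w)=\max_{y\in[x^0-b,x^0]}f(y)\}$. Then $x^0-b\le w^*<x^0-\frac b2$.
   Context: For integers $a\le b$, $[a,b]$ denotes the set of integers $\{a,a+1,\dots,b\}$. Floors and ceilings of vectors are taken componentwise. A set $D^n\subseteq\mathbb{Z}^n$ is an Ameso set if $\lceil(\vec x+\vec y)/2\rceil,\lfloor(\vec x+\vec y)/2\rfloor\in D^n$ for all $\vec x,\vec y\in D^n$. For $C\ge 0$, $(D^n,f)$ is an Ameso($C$) pair if $D^n$ is an Ameso set, $f:D^n\to\mathbb{R}$ is bounded below, and $f(\vec x)+f(\vec y)+C\ge f(\lceil(\vec x+\vec y)/2\rceil)+f(\lfloor(\vec x+\vec y)/2\rfloor)$ for all $\vec x,\vec y\in D^n$. *)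

theory Defs
  imports Complex_Main
begin

text \<open>One-dimensional instance (n = 1) of Ameso sets and Ameso(C) pairs.
  Points of D are integers; ceiling/floor of (x+y)/2 taken in the reals.\<close>

definition ameso_set :: "int set \<Rightarrow> bool" where
  "ameso_set D \<longleftrightarrow>
     (\<forall>x\<in>D. \<forall>y\<in>D. \<lceil>real_of_int (x + y) / 2\<rceil> \<in> D \<and> \<lfloor>real_of_int (x + y) / 2\<rfloor> \<in> D)"

definition ameso_pair :: "real \<Rightarrow> int set \<Rightarrow> (int \<Rightarrow> real) \<Rightarrow> bool" where
  "ameso_pair C D f \<longleftrightarrow> C \<ge> 0 \<and> ameso_set D \<and> bdd_below (f ` D) \<and>
     (\<forall>x\<in>D. \<forall>y\<in>D. f x + f y + C \<ge>
        f \<lceil>real_of_int (x + y) / 2\<rceil> + f \<lfloor>real_of_int (x + y) / 2\<rfloor>)"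

end

theory Submission
  imports Defs
begin

text \<open>Suppose the least maximiser \<open>w\<close> of \<open>f\<close> on \<open>[x\<^sub>0 - b, x\<^sub>0]\<close> lay in the upper half.
  Its mirror image \<open>y = 2w - x\<^sub>0\<close> across \<open>w\<close> then lies in the interval, and the Ameso
  inequality at the pair \<open>y, x\<^sub>0\<close> (whose midpoint is \<open>w\<close>) together with
  \<open>f x\<^sub>0 + C \<le> max f\<close> shows that \<open>y\<close> is a maximiser as well. By minimality of \<open>w\<close> this
  forces \<open>y = w = x\<^sub>0\<close>; but then the minimum and maximum of \<open>f\<close> coincide, so \<open>x\<^sub>0 - b < w\<close>
  would already be a maximiser.\<close>

lemma ameso_pair_midpoint_le:
  assumes "ameso_pair C D f" and "x \<in> D" and "y \<in> D" and "x + y = 2 * m"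
  shows "2 * f m \<le> f x + f y + C"
proof -
  have "real_of_int (x + y) / 2 = real_of_int m"
    using assms(4) by simp
  then show ?thesis
    using assms(1-3) unfolding ameso_pair_def by force
qed

lemma Min_of_maximisers:
  fixes f :: "'a::linorder \<Rightarrow> 'b::linorder"
  assumes "finite S" and "S \<noteq> {}" and "w = Min {w \<in> S. f w = Max (f ` S)}"
  shows "w \<in> S" and "f w = Max (f ` S)" and "\<And>y. y \<in> S \<Longrightarrow> f y \<le> f w"
    and "\<And>y. y \<in> S \<Longrightarrow> f y = f w \<Longrightarrow> w \<le> y"
proof -
  have "Max (f ` S) \<in> f ` S"
    using assms(1,2) by simp
  then have "{w \<in> S. f w = Max (f ` S)} \<noteq> {}"
    by auto
  then have w: "w \<in> S" "f w = Max (f ` S)"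
    using Min_in[of "{w \<in> S. f w = Max (f ` S)}"] assms(1,3) by auto
  then show "w \<in> S" and "f w = Max (f ` S)" and "\<And>y. y \<in> S \<Longrightarrow> f y \<le> f w"
    using assms(1) by auto
  show "\<And>y. y \<in> S \<Longrightarrow> f y = f w \<Longrightarrow> w \<le> y"
    using w assms(1,3) by simp
qed

lemma least_maximiser_in_lower_half:
  fixes f :: "int \<Rightarrow> real"
  assumes midpoint: "\<And>x y m. x \<in> {a..c} \<Longrightarrow> y \<in> {a..c} \<Longrightarrow> x + y = 2 * m \<Longrightarrow>
        2 * f m \<le> f x + f y + C"
    and "a < c" and min_c: "\<And>y. y \<in> {a..c} \<Longrightarrow> f c \<le> f y" and gap: "f c + C \<le> f w"
    and w: "w \<in> {a..c}" and max_w: "\<And>y. y \<in> {a..c} \<Longrightarrow> f y \<le> f w"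
    and least_w: "\<And>y. y \<in> {a..c} \<Longrightarrow> f y = f w \<Longrightarrow> w \<le> y"
  shows "2 * w < a + c"
proof (rule ccontr)
  assume "\<not> 2 * w < a + c"
  define y where "y = 2 * w - c"
  have y: "y \<in> {a..c}"
    using \<open>\<not> 2 * w < a + c\<close> w by (auto simp: y_def)
  have "2 * f w \<le> f y + f c + C"
    using midpoint[OF y, of c w] \<open>a < c\<close> by (simp add: y_def)
  then have "f y = f w"
    using gap max_w[OF y] by linarith
  then have "w = c"
    using least_w[OF y] w by (simp add: y_def)
  have a: "a \<in> {a..c}"
    using \<open>a < c\<close> by simp
  have "f a = f w"
    using min_c[OF a] max_w[OF a] \<open>w = c\<close> by simp
  then show False
    using least_w[OF a] \<open>w = c\<close> \<open>a < c\<close> by simp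
qed

theorem lemma4:
  fixes xs xt x0 b :: int and C :: real and f :: "int \<Rightarrow> real"
  assumes "xs < xt" and "C \<ge> 0"
    and "ameso_pair C {xs..xt} f"
    and "x0 \<in> {xs..xt}" and "b > 0" and "{x0 - b..x0} \<subseteq> {xs..xt}"
    and "f x0 = Min (f ` {x0 - b..x0})"
    and "f x0 + C \<le> Max (f ` {x0 - b..x0})"
  shows "let w = Min {w \<in> {x0 - b..x0}. f w = Max (f ` {x0 - b..x0})}
         in x0 - b \<le> w \<and> real_of_int w < real_of_int x0 - real_of_int b / 2"
proof -
  define w where "w = Min {w \<in> {x0 - b..x0}. f w = Max (f ` {x0 - b..x0})}"
  have nonempty: "{x0 - b..x0} \<noteq> {}"
    using \<open>b > 0\<close> by simp
  note w = Min_of_maximisers[OF finite_atLeastAtMost_int nonempty w_def]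
  have "2 * w < (x0 - b) + x0"
  proof (rule least_maximiser_in_lower_half[of _ _ f C, OF _ _ _ _ w(1,3,4)])
    show "2 * f m \<le> f x + f y + C" if "x \<in> {x0 - b..x0}" "y \<in> {x0 - b..x0}" "x + y = 2 * m"
      for x y m
      using ameso_pair_midpoint_le[OF assms(3)] that assms(6) by blast
    show "f x0 \<le> f y" if "y \<in> {x0 - b..x0}" for y
      using assms(7) that by simp
  qed (use \<open>b > 0\<close> assms(8) w(2) in auto)
  then show ?thesis
    using w(1) unfolding w_def[symmetric] Let_def by simp
qed

end
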